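(* Let $G=(V,E,W)$ be a finite connected weighted graph and let $\sigma$ be an inconsistent $d$-dimensional signature on $G$. Let $\rho$ denote the nullity of the connection Laplacian $\mathcal{L}^\sigma$. Then there exists a $(d-\rho)$-dimensional signature $\tau$ on $G$ such that $\mathcal{L}^\tau$ is invertible and $$\sigma\cong \Big(\bigoplus_{i=1}^{\rho}\iota^1\Big)\oplus\tau .$$
   Context: $G=(V,E,W)$: $V=\{1,\dots,n\}$, $E$ a set of undirected edges without loops or multiple edges, symmetric weights $w_{ij}>0$ iff $\{i,j\}\in E$, $\deg(i)=\sum_{j\sim i}w_{ij}$. The oriented edges are $E^{\mathrm{or}}=\{(i,j),(j,i):\{i,j\}\in E\}$. A $d$-dimensional signature is a map $\sigma:E^{\mathrm{or}}\to\mathsf{O}(d)$ with $\sigma_{ji}=\sigma_{ij}^{-1}=\sigma_{ij}^{\mathrm T}$. Its connection Laplacian $\mathcal{L}^\sigma$ is the $nd\times nd$ block matrix with $d\times d$ blocks $\mathcal{L}_{ii}=\deg(i)I_d$, $\mathcal{L}_{ij}=-w_{ij}\sigma_{ij}$ if $i\sim j$, and $0$ otherwise. $\sigma$ is consistent if the product of $\sigma$ along every directed cycle is $I_d$, and inconsistent otherwise. Two $d$-dimensional signatures satisfy $\sigma\cong\tau$ (switching equivalence) if there is $f:V\to\mathsf{O}(d)$ with $f(i)\sigma_{ij}=\tau_{ij}f(j)$ for all $(i,j)\in E^{\mathrm{or}}$. For a $d$-dimensional signature $\sigma$ and a $d'$-dimensional signature $\sigma'$, the direct sum is $(\sigma\oplus\sigma')_{ij}=\begin{bmatrix}\sigma_{ij}&0\\0&\sigma'_{ij}\end{bmatrix}$.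 $\iota^1$ denotes the $1$-dimensional signature identically equal to $1$. *)

theory Defs
  imports "Jordan_Normal_Form.Matrix_Kernel"
begin

text \<open>Weighted graph on the vertex set {0..<n} (the paper's {1..n}, shifted),
  given by a weight function w; {i,j} is an edge iff w i j > 0.\<close>

definition weighted_graph :: "nat \<Rightarrow> (nat \<Rightarrow> nat \<Rightarrow> real) \<Rightarrow> bool" where
  "weighted_graph n w \<longleftrightarrow>
     (\<forall>i<n. \<forall>j<n. w i j = w j i \<and> w i j \<ge> 0) \<and> (\<forall>i<n. w i i = 0)"

definition adj :: "nat \<Rightarrow> (nat \<Rightarrow> nat \<Rightarrow> real) \<Rightarrow> nat \<Rightarrow> nat \<Rightarrow> bool" where
  "adj n w i j \<longleftrightarrow> i < n \<and> j < n \<and> w i j > 0"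

definition connected_graph :: "nat \<Rightarrow> (nat \<Rightarrow> nat \<Rightarrow> real) \<Rightarrow> bool" where
  "connected_graph n w \<longleftrightarrow> 0 < n \<and> (\<forall>i<n. \<forall>j<n. (adj n w)\<^sup>*\<^sup>* i j)"

definition deg :: "nat \<Rightarrow> (nat \<Rightarrow> nat \<Rightarrow> real) \<Rightarrow> nat \<Rightarrow> real" where
  "deg n w i = (\<Sum>j<n. w i j)"

definition orth_mat :: "nat \<Rightarrow> real mat \<Rightarrow> bool" where
  "orth_mat d A \<longleftrightarrow> A \<in> carrier_mat d d \<and> transpose_mat A * A = 1\<^sub>m d"

definition signature :: "nat \<Rightarrow> (nat \<Rightarrow> nat \<Rightarrow> real) \<Rightarrow> nat \<Rightarrow> (nat \<Rightarrow> nat \<Rightarrow> real mat) \<Rightarrow> bool" where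
  "signature n w d \<sigma> \<longleftrightarrow>
     (\<forall>i j. adj n w i j \<longrightarrow> orth_mat d (\<sigma> i j) \<and> \<sigma> j i = transpose_mat (\<sigma> i j))"

text \<open>Connection Laplacian: nd x nd block matrix, vertex i occupies rows i*d ..< (i+1)*d.\<close>
definition conn_lap :: "nat \<Rightarrow> (nat \<Rightarrow> nat \<Rightarrow> real) \<Rightarrow> nat \<Rightarrow> (nat \<Rightarrow> nat \<Rightarrow> real mat) \<Rightarrow> real mat" where
  "conn_lap n w d \<sigma> = mat (n * d) (n * d) (\<lambda>(r, c).
     let i = r div d; a = r mod d; j = c div d; b = c mod d in
     if i = j then (if a = b then deg n w i else 0)
     else if adj n w i j then - w i j * (\<sigma> i j $$ (a, b)) else 0)"

definition is_cycle :: "nat \<Rightarrow> (nat \<Rightarrow> nat \<Rightarrow> real) \<Rightarrow> nat list \<Rightarrow> bool" where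
  "is_cycle n w vs \<longleftrightarrow> length vs \<ge> 3 \<and> distinct vs \<and>
     (\<forall>(i, j) \<in> set (zip vs (tl vs @ [hd vs])). adj n w i j)"

definition cycle_prod :: "nat \<Rightarrow> (nat \<Rightarrow> nat \<Rightarrow> real mat) \<Rightarrow> nat list \<Rightarrow> real mat" where
  "cycle_prod d \<sigma> vs = foldr (\<lambda>(i, j) M. \<sigma> i j * M) (zip vs (tl vs @ [hd vs])) (1\<^sub>m d)"

definition consistent :: "nat \<Rightarrow> (nat \<Rightarrow> nat \<Rightarrow> real) \<Rightarrow> nat \<Rightarrow> (nat \<Rightarrow> nat \<Rightarrow> real mat) \<Rightarrow> bool" where
  "consistent n w d \<sigma> \<longleftrightarrow> (\<forall>vs. is_cycle n w vs \<longrightarrow> cycle_prod d \<sigma> vs = 1\<^sub>m d)"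

definition switch_equiv :: "nat \<Rightarrow> (nat \<Rightarrow> nat \<Rightarrow> real) \<Rightarrow> nat \<Rightarrow>
    (nat \<Rightarrow> nat \<Rightarrow> real mat) \<Rightarrow> (nat \<Rightarrow> nat \<Rightarrow> real mat) \<Rightarrow> bool" where
  "switch_equiv n w d \<sigma> \<tau> \<longleftrightarrow>
     (\<exists>f. (\<forall>i<n. orth_mat d (f i)) \<and>
          (\<forall>i j. adj n w i j \<longrightarrow> f i * \<sigma> i j = \<tau> i j * f j))"

definition sig_dsum :: "nat \<Rightarrow> nat \<Rightarrow> (nat \<Rightarrow> nat \<Rightarrow> real mat) \<Rightarrow> (nat \<Rightarrow> nat \<Rightarrow> real mat)
    \<Rightarrow> nat \<Rightarrow> nat \<Rightarrow> real mat" where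
  "sig_dsum d d' \<sigma> \<sigma>' i j = four_block_mat (\<sigma> i j) (0\<^sub>m d d') (0\<^sub>m d' d) (\<sigma>' i j)"

definition iota1 :: "nat \<Rightarrow> nat \<Rightarrow> real mat" where
  "iota1 i j = 1\<^sub>m 1"

fun iota_sum :: "nat \<Rightarrow> nat \<Rightarrow> nat \<Rightarrow> real mat" where
  "iota_sum 0 = (\<lambda>i j. 1\<^sub>m 0)"
| "iota_sum (Suc k) = sig_dsum k 1 (iota_sum k) iota1"

end

theory Submission
  imports Defs
begin

text \<open>
  A vector x in the kernel of the connection Laplacian is a parallel section, x_i = \<sigma>_ij x_j on
  every edge, because 2 x \<bullet> L x = \<Sum> w_ij |x_i - \<sigma>_ij x_j|^2. On a connected graph a parallel
  section is determined by its value at the root vertex 0 through orthogonal transports G_i with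
  x_0 = G_i x_i, and the possible root values form a subspace U of R^d; hence \<rho> = dim U.
  Take an orthonormal frame q_0, ..., q_(d-1) whose first \<rho> vectors span U, let Q be the matrix
  with rows q_k, and switch \<sigma> by f_i = Q G_i. The switched signature fixes e_0, ..., e_(\<rho>-1) on
  every edge, so, being orthogonal, it is 1_\<rho> \<oplus> \<tau>. Padding a parallel section of \<tau> with
  zeros and switching back gives a parallel section of \<sigma> whose root value is orthogonal to U,
  hence zero; so L^\<tau> has trivial kernel.
\<close>

lemma smult_zero_vec [simp]: "c \<cdot>\<^sub>v 0\<^sub>v n = (0\<^sub>v n :: 'a :: mult_zero vec)"
  by (rule eq_vecI) auto

lemma mult_mat_vec_zero [simp]:
  "(A :: 'a :: semiring_0 mat) \<in> carrier_mat m n \<Longrightarrow> A *\<^sub>v 0\<^sub>v n = 0\<^sub>v m"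
  by (rule eq_vecI) auto

lemma scalar_prod_self_nonneg: "0 \<le> (v :: real vec) \<bullet> v"
  by (simp add: scalar_prod_def sum_nonneg)

lemma scalar_prod_self_eq_0_iff:
  assumes "(v :: real vec) \<in> carrier_vec d"
  shows "v \<bullet> v = 0 \<longleftrightarrow> v = 0\<^sub>v d"
proof
  assume "v \<bullet> v = 0"
  then have "\<forall>a\<in>{0..<d}. v $ a * v $ a = 0"
    using assms by (subst (asm) scalar_prod_def) (simp add: sum_nonneg_eq_0_iff)
  then show "v = 0\<^sub>v d" using assms by (intro eq_vecI) auto
qed simp

lemma vec_diff_eq_0_iff:
  assumes "(u :: 'a :: ab_group_add vec) \<in> carrier_vec d" "v \<in> carrier_vec d"
  shows "u - v = 0\<^sub>v d \<longleftrightarrow> u = v"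
proof
  assume diff: "u - v = 0\<^sub>v d"
  have "u $ a = v $ a" if "a < d" for a
    using arg_cong[OF diff, of "\<lambda>z. z $ a"] that assms by simp
  then show "u = v" using assms by (intro eq_vecI) auto
qed (use assms in simp)

lemma unit_vec_Suc_0: "unit_vec (Suc d) 0 = vCons (1 :: 'a :: zero_neq_one) (0\<^sub>v d)"
  by (rule eq_vecI) (auto simp: vec_index_vCons)

lemma vCons_0_add:
  "s \<in> carrier_vec d \<Longrightarrow> t \<in> carrier_vec d \<Longrightarrow>
    vCons (0 :: 'a :: monoid_add) (s + t) = vCons 0 s + vCons 0 t"
  by (rule eq_vecI) (auto simp: vec_index_vCons)

lemma vCons_0_smult: "vCons (0 :: 'a :: mult_zero) (c \<cdot>\<^sub>v t) = c \<cdot>\<^sub>v vCons 0 t"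
  by (rule eq_vecI) (auto simp: vec_index_vCons)

lemma vCons_eq_unit_vec_plus:
  "t \<in> carrier_vec d \<Longrightarrow> vCons a t = a \<cdot>\<^sub>v unit_vec (Suc d) 0 + vCons (0 :: 'a :: semiring_1) t"
  by (rule eq_vecI) (auto simp: vec_index_vCons)

lemma vCons_hd_tl_vec: "z \<in> carrier_vec (Suc d) \<Longrightarrow> vCons (z $ 0) (vec d (\<lambda>b. z $ Suc b)) = z"
  by (rule eq_vecI) (auto simp: vec_index_vCons)

lemma orth_mat_carrier: "orth_mat d A \<Longrightarrow> A \<in> carrier_mat d d"
  and orth_mat_transpose_mult: "orth_mat d A \<Longrightarrow> transpose_mat A * A = 1\<^sub>m d"
  by (auto simp: orth_mat_def)

lemma orth_mat_mult_transpose: "orth_mat d A \<Longrightarrow> A * transpose_mat A = 1\<^sub>m d"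
  unfolding orth_mat_def using mat_mult_left_right_inverse[of "transpose_mat A" d A] by auto

lemma orth_mat_transpose: "orth_mat d A \<Longrightarrow> orth_mat d (transpose_mat A)"
  using orth_mat_mult_transpose[of d A] by (auto simp: orth_mat_def)

lemma orth_mat_one: "orth_mat d (1\<^sub>m d)"
  by (simp add: orth_mat_def)

lemma orth_mat_mult:
  assumes "orth_mat d A" "orth_mat d B"
  shows "orth_mat d (A * B)"
proof -
  have A: "A \<in> carrier_mat d d" and B: "B \<in> carrier_mat d d"
    using assms by (auto simp: orth_mat_def)
  have "transpose_mat (A * B) * (A * B) = transpose_mat B * ((transpose_mat A * A) * B)"
    using A B by (simp add: transpose_mult assoc_mult_mat[of _ d d _ d _ d])
  also have "\<dots> = 1\<^sub>m d" using assms B by (simp add: orth_mat_def)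
  finally show ?thesis using A B by (simp add: orth_mat_def)
qed

lemma orth_mat_transpose_mult_vec:
  assumes "orth_mat d A" "v \<in> carrier_vec d"
  shows "transpose_mat A *\<^sub>v (A *\<^sub>v v) = v"
proof -
  have A: "A \<in> carrier_mat d d" using assms(1) by (rule orth_mat_carrier)
  have "transpose_mat A *\<^sub>v (A *\<^sub>v v) = (transpose_mat A * A) *\<^sub>v v"
    using A assms(2) by (simp add: assoc_mult_mat_vec[of _ d d])
  then show ?thesis using assms by (simp add: orth_mat_def)
qed

lemma orth_mat_mult_transpose_vec:
  "orth_mat d A \<Longrightarrow> v \<in> carrier_vec d \<Longrightarrow> A *\<^sub>v (transpose_mat A *\<^sub>v v) = v"
  using orth_mat_transpose_mult_vec[OF orth_mat_transpose] by (auto simp: orth_mat_def)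

lemma scalar_prod_transpose_mat:
  assumes A: "(A :: 'a :: comm_ring mat) \<in> carrier_mat d d"
    and u: "u \<in> carrier_vec d" and v: "v \<in> carrier_vec d"
  shows "u \<bullet> (transpose_mat A *\<^sub>v v) = (A *\<^sub>v u) \<bullet> v"
proof -
  have "u \<bullet> (transpose_mat A *\<^sub>v v) = (transpose_mat A *\<^sub>v v) \<bullet> u"
    by (rule comm_scalar_prod[of _ d]) (use A u v in auto)
  also have "\<dots> = v \<bullet> (A *\<^sub>v u)" by (rule transpose_vec_mult_scalar[OF A u v])
  also have "\<dots> = (A *\<^sub>v u) \<bullet> v" by (rule comm_scalar_prod[of _ d]) (use A u v in auto)
  finally show ?thesis .
qed

lemma orth_mat_scalar_prod:
  assumes "orth_mat d A" "u \<in> carrier_vec d" "v \<in> carrier_vec d"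
  shows "(A *\<^sub>v u) \<bullet> (A *\<^sub>v v) = u \<bullet> v"
proof -
  have A: "A \<in> carrier_mat d d" using assms(1) by (rule orth_mat_carrier)
  have "(A *\<^sub>v u) \<bullet> (A *\<^sub>v v) = u \<bullet> (transpose_mat A *\<^sub>v (A *\<^sub>v v))"
    using A assms by (simp add: scalar_prod_transpose_mat)
  then show ?thesis using assms by (simp add: orth_mat_transpose_mult_vec)
qed

lemma orth_mat_diff_scalar_prod:
  assumes A: "orth_mat d A" and u: "u \<in> carrier_vec d" and v: "v \<in> carrier_vec d"
  shows "(u - A *\<^sub>v v) \<bullet> (u - A *\<^sub>v v) = (u \<bullet> u - u \<bullet> (A *\<^sub>v v)) + (v \<bullet> v - u \<bullet> (A *\<^sub>v v))"
proof -
  have Av: "A *\<^sub>v v \<in> carrier_vec d" using orth_mat_carrier[OF A] v by simp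
  have "(A *\<^sub>v v) \<bullet> u = u \<bullet> (A *\<^sub>v v)" using Av u by (rule comm_scalar_prod)
  then show ?thesis
    using Av u v orth_mat_scalar_prod[OF A v v]
    by (simp add: minus_scalar_prod_distrib[of _ d] scalar_prod_minus_distrib[of _ d])
qed

definition vec_block :: "nat \<Rightarrow> 'a vec \<Rightarrow> nat \<Rightarrow> 'a vec" where
  "vec_block d x i = vec d (\<lambda>a. x $ (i * d + a))"

definition vec_of_blocks :: "nat \<Rightarrow> nat \<Rightarrow> (nat \<Rightarrow> 'a vec) \<Rightarrow> 'a vec" where
  "vec_of_blocks n d F = vec (n * d) (\<lambda>c. F (c div d) $ (c mod d))"

lemma vec_block_carrier [simp]: "vec_block d x i \<in> carrier_vec d"
  and dim_vec_block [simp]: "dim_vec (vec_block d x i) = d"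
  and index_vec_block [simp]: "a < d \<Longrightarrow> vec_block d x i $ a = x $ (i * d + a)"
  by (auto simp: vec_block_def)

lemma vec_of_blocks_carrier [simp]: "vec_of_blocks n d F \<in> carrier_vec (n * d)"
  and dim_vec_of_blocks [simp]: "dim_vec (vec_of_blocks n d F) = n * d"
  by (auto simp: vec_of_blocks_def)

lemma block_index_less: "i < n \<Longrightarrow> a < d \<Longrightarrow> i * d + a < n * (d::nat)"
proof -
  assume "i < n" "a < d"
  then have "i * d + a < Suc i * d" by simp
  also have "\<dots> \<le> n * d" using \<open>i < n\<close> by (intro mult_right_mono) auto
  finally show ?thesis .
qed

lemma vec_block_of_blocks [simp]:
  "i < n \<Longrightarrow> F i \<in> carrier_vec d \<Longrightarrow> vec_block d (vec_of_blocks n d F) i = F i"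
  by (rule eq_vecI) (auto simp: vec_of_blocks_def block_index_less)

lemma sum_blocks: "(\<Sum>c<n * d. f c) = (\<Sum>i<n. \<Sum>a<d. f (i * d + (a::nat)))"
proof -
  have "(\<Sum>a<d. f (i * d + a)) = (\<Sum>c\<in>{i * d..<i * d + d}. f c)" for i
    using sum.shift_bounds_nat_ivl[of f 0 "i * d" d] by (simp add: atLeast0LessThan add.commute)
  then show ?thesis by (simp add: sum.nat_group)
qed

lemma vec_eq_blocksI:
  assumes "x \<in> carrier_vec (n * d)" "y \<in> carrier_vec (n * d)"
    and "\<And>i. i < n \<Longrightarrow> vec_block d x i = vec_block d y i"
  shows "x = y"
proof (rule eq_vecI)
  fix c assume "c < dim_vec y"
  then have c: "c < n * d" using assms by simp
  then have "d > 0" by (cases d) auto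
  with c have "c div d < n" "c mod d < d" by (auto simp: less_mult_imp_div_less)
  moreover have "c = c div d * d + c mod d" by simp
  ultimately show "x $ c = y $ c" using assms(3)[of "c div d"] by (metis index_vec_block)
qed (use assms in simp)

lemma scalar_prod_blocks:
  assumes "x \<in> carrier_vec (n * d)" "y \<in> carrier_vec (n * d)"
  shows "x \<bullet> y = (\<Sum>i<n. vec_block d x i \<bullet> vec_block d y i)"
  using assms by (simp add: scalar_prod_def atLeast0LessThan sum_blocks)

lemma vec_block_zero [simp]: "i < n \<Longrightarrow> vec_block d (0\<^sub>v (n * d)) i = 0\<^sub>v d"
  by (rule eq_vecI) (auto simp: block_index_less)

lemma vec_block_add:
  "x \<in> carrier_vec (n * d) \<Longrightarrow> y \<in> carrier_vec (n * d) \<Longrightarrow> i < n \<Longrightarrow>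
    vec_block d (x + y) i = vec_block d x i + vec_block d y i"
  by (rule eq_vecI) (auto simp: block_index_less)

lemma vec_block_smult:
  "x \<in> carrier_vec (n * d) \<Longrightarrow> i < n \<Longrightarrow> vec_block d (c \<cdot>\<^sub>v x) i = c \<cdot>\<^sub>v vec_block d x i"
  by (rule eq_vecI) (auto simp: block_index_less)

section \<open>The connection Laplacian and parallel sections\<close>

lemma adj_less: "adj n w i j \<Longrightarrow> i < n \<and> j < n"
  by (simp add: adj_def)

lemma adj_sym: "weighted_graph n w \<Longrightarrow> adj n w i j \<Longrightarrow> adj n w j i"
  by (auto simp: weighted_graph_def adj_def)

lemma not_adj_self: "weighted_graph n w \<Longrightarrow> \<not> adj n w i i"
  by (auto simp: weighted_graph_def adj_def)

lemma weight_eq_0_if_not_adj: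
  "weighted_graph n w \<Longrightarrow> i < n \<Longrightarrow> j < n \<Longrightarrow> \<not> adj n w i j \<Longrightarrow> w i j = 0"
  by (force simp: weighted_graph_def adj_def)

lemma signature_orth: "signature n w d \<sigma> \<Longrightarrow> adj n w i j \<Longrightarrow> orth_mat d (\<sigma> i j)"
  and signature_transpose: "signature n w d \<sigma> \<Longrightarrow> adj n w i j \<Longrightarrow> \<sigma> j i = transpose_mat (\<sigma> i j)"
  by (auto simp: signature_def)

lemma signature_carrier: "signature n w d \<sigma> \<Longrightarrow> adj n w i j \<Longrightarrow> \<sigma> i j \<in> carrier_mat d d"
  using orth_mat_carrier signature_orth by blast

lemma conn_lap_carrier: "conn_lap n w d \<sigma> \<in> carrier_mat (n * d) (n * d)"
  by (simp add: conn_lap_def)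

lemma conn_lap_index_blocks:
  "i < n \<Longrightarrow> j < n \<Longrightarrow> a < d \<Longrightarrow> b < d \<Longrightarrow> conn_lap n w d \<sigma> $$ (i * d + a, j * d + b) =
    (if i = j then (if a = b then deg n w i else 0)
     else if adj n w i j then - w i j * \<sigma> i j $$ (a, b) else 0)"
  by (simp add: conn_lap_def Let_def block_index_less)

lemma conn_lap_mult_vec_index:
  assumes wg: "weighted_graph n w" and sg: "signature n w d \<sigma>"
    and i: "i < n" and a: "a < d" and x: "x \<in> carrier_vec (n * d)"
  shows "(conn_lap n w d \<sigma> *\<^sub>v x) $ (i * d + a) =
    (\<Sum>j<n. if adj n w i j then w i j * (x $ (i * d + a) - (\<sigma> i j *\<^sub>v vec_block d x j) $ a) else 0)"
proof -
  let ?L = "conn_lap n w d \<sigma>"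
  have ia: "i * d + a < n * d" using i a by (rule block_index_less)
  note entry = conn_lap_index_blocks[OF i _ a]
  have block: "(\<Sum>b<d. ?L $$ (i * d + a, j * d + b) * x $ (j * d + b)) =
      (if j = i then deg n w i * x $ (i * d + a) else 0)
      + (if adj n w i j then - w i j * (\<sigma> i j *\<^sub>v vec_block d x j) $ a else 0)" if j: "j < n" for j
  proof (cases "j = i")
    case True
    then have "(\<Sum>b<d. ?L $$ (i * d + a, j * d + b) * x $ (j * d + b))
        = (\<Sum>b<d. if b = a then deg n w i * x $ (i * d + a) else 0)"
      using j by (intro sum.cong) (auto simp: entry)
    then show ?thesis using True a not_adj_self[OF wg] by simp
  next
    case False
    show ?thesis
    proof (cases "adj n w i j")
      case True
      have "(\<sigma> i j *\<^sub>v vec_block d x j) $ a = (\<Sum>b<d. \<sigma> i j $$ (a, b) * x $ (j * d + b))"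
        using signature_carrier[OF sg True] a by (simp add: scalar_prod_def atLeast0LessThan)
      then show ?thesis using False True j by (simp add: entry sum_distrib_left mult.assoc)
    qed (use False j in \<open>simp add: entry\<close>)
  qed
  have deg: "deg n w i = (\<Sum>j<n. if adj n w i j then w i j else 0)"
    unfolding deg_def using weight_eq_0_if_not_adj[OF wg i] by (intro sum.cong) auto
  have "(?L *\<^sub>v x) $ (i * d + a) = (\<Sum>c<n * d. ?L $$ (i * d + a, c) * x $ c)"
    using ia x by (simp add: conn_lap_def scalar_prod_def atLeast0LessThan)
  also have "\<dots> = (\<Sum>j<n. \<Sum>b<d. ?L $$ (i * d + a, j * d + b) * x $ (j * d + b))"
    by (rule sum_blocks)
  also have "\<dots> = deg n w i * x $ (i * d + a)
      + (\<Sum>j<n. if adj n w i j then - w i j * (\<sigma> i j *\<^sub>v vec_block d x j) $ a else 0)"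
    using i by (simp add: block sum.distrib)
  also have "\<dots> = (\<Sum>j<n. if adj n w i j
      then w i j * (x $ (i * d + a) - (\<sigma> i j *\<^sub>v vec_block d x j) $ a) else 0)"
    unfolding deg sum_distrib_right sum.distrib[symmetric]
    by (intro sum.cong) (auto simp: algebra_simps)
  finally show ?thesis .
qed

definition parallel ::
  "nat \<Rightarrow> (nat \<Rightarrow> nat \<Rightarrow> real) \<Rightarrow> nat \<Rightarrow> (nat \<Rightarrow> nat \<Rightarrow> real mat) \<Rightarrow> real vec \<Rightarrow> bool"
where
  "parallel n w d \<sigma> x \<longleftrightarrow> (\<forall>i j. adj n w i j \<longrightarrow> vec_block d x i = \<sigma> i j *\<^sub>v vec_block d x j)"

lemma conn_lap_scalar_prod:
  assumes wg: "weighted_graph n w" and sg: "signature n w d \<sigma>" and x: "x \<in> carrier_vec (n * d)"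
  shows "x \<bullet> (conn_lap n w d \<sigma> *\<^sub>v x) = (\<Sum>i<n. \<Sum>j<n. if adj n w i j
      then w i j * (vec_block d x i \<bullet> vec_block d x i
        - vec_block d x i \<bullet> (\<sigma> i j *\<^sub>v vec_block d x j))
      else 0)"
proof -
  let ?L = "conn_lap n w d \<sigma>"
  define X where "X = vec_block d x"
  have summand: "X i $ a * (?L *\<^sub>v x) $ (i * d + a) = (\<Sum>j<n. if adj n w i j
      then w i j * (X i $ a * X i $ a - X i $ a * (\<sigma> i j *\<^sub>v X j) $ a) else 0)"
    if "i < n" "a < d" for i a
    using conn_lap_mult_vec_index[OF wg sg that x] that
    by (simp add: X_def sum_distrib_left algebra_simps if_distrib cong: if_cong)
  have "x \<bullet> (?L *\<^sub>v x) = (\<Sum>i<n. X i \<bullet> vec_block d (?L *\<^sub>v x) i)"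
    unfolding X_def by (rule scalar_prod_blocks[OF x mult_mat_vec_carrier[OF conn_lap_carrier x]])
  also have "\<dots> = (\<Sum>i<n. \<Sum>a<d. X i $ a * (?L *\<^sub>v x) $ (i * d + a))"
    by (intro sum.cong refl) (simp add: X_def scalar_prod_def atLeast0LessThan)
  also have "\<dots> = (\<Sum>i<n. \<Sum>j<n. \<Sum>a<d. if adj n w i j
      then w i j * (X i $ a * X i $ a - X i $ a * (\<sigma> i j *\<^sub>v X j) $ a) else 0)"
    by (simp add: summand sum.swap[of _ "{..<d}"])
  also have "\<dots> = (\<Sum>i<n. \<Sum>j<n. if adj n w i j
      then w i j * (X i \<bullet> X i - X i \<bullet> (\<sigma> i j *\<^sub>v X j)) else 0)"
  proof (intro sum.cong refl)
    fix i j
    have dot: "(\<Sum>a<d. c * (u $ a * u $ a - u $ a * v $ a)) = c * (u \<bullet> u - u \<bullet> v)"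
      if "u \<in> carrier_vec d" "v \<in> carrier_vec d" for c :: real and u v
      using that
      by (simp add: scalar_prod_def atLeast0LessThan sum_distrib_left right_diff_distrib
          sum_subtractf)
    show "(\<Sum>a<d. if adj n w i j
        then w i j * (X i $ a * X i $ a - X i $ a * (\<sigma> i j *\<^sub>v X j) $ a) else 0)
      = (if adj n w i j then w i j * (X i \<bullet> X i - X i \<bullet> (\<sigma> i j *\<^sub>v X j)) else 0)"
    proof (cases "adj n w i j")
      case True
      have "\<sigma> i j *\<^sub>v X j \<in> carrier_vec d"
        using signature_carrier[OF sg True] by (simp add: X_def)
      then show ?thesis using True dot[of "X i"] by (simp add: X_def)
    qed simp
  qed
  finally show ?thesis unfolding X_def .
qed

lemma conn_lap_quadratic_form:
  assumes wg: "weighted_graph n w" and sg: "signature n w d \<sigma>" and x: "x \<in> carrier_vec (n * d)"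
  shows "2 * (x \<bullet> (conn_lap n w d \<sigma> *\<^sub>v x)) = (\<Sum>i<n. \<Sum>j<n. if adj n w i j
      then w i j * ((vec_block d x i - \<sigma> i j *\<^sub>v vec_block d x j)
        \<bullet> (vec_block d x i - \<sigma> i j *\<^sub>v vec_block d x j))
      else 0)"
proof -
  define X where "X i = vec_block d x i" for i
  define S where "S i j = \<sigma> i j *\<^sub>v X j" for i j
  define T where "T i j = (if adj n w i j then w i j * (X i \<bullet> X i - X i \<bullet> S i j) else 0)" for i j
  define T' where "T' i j = (if adj n w i j then w i j * (X j \<bullet> X j - X i \<bullet> S i j) else 0)" for i j
  have X: "X i \<in> carrier_vec d" for i by (simp add: X_def)
  have S: "S i j \<in> carrier_vec d" if "adj n w i j" for i j
    using signature_carrier[OF sg that] by (simp add: S_def X_def)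
  have T'_swap: "T' i j = T j i" for i j
  proof (cases "adj n w i j")
    case True
    have "X j \<bullet> S j i = X i \<bullet> S i j"
      using signature_carrier[OF sg True] X
      by (simp add: S_def signature_transpose[OF sg True] scalar_prod_transpose_mat
          comm_scalar_prod[of _ d])
    then show ?thesis
      using True adj_sym[OF wg True] adj_less[OF True] wg
      by (simp add: T_def T'_def weighted_graph_def)
  qed (use adj_sym[OF wg] in \<open>auto simp: T_def T'_def\<close>)
  have square: "(if adj n w i j then w i j * ((X i - S i j) \<bullet> (X i - S i j)) else 0)
      = T i j + T' i j" for i j
  proof (cases "adj n w i j")
    case True
    have "(X i - S i j) \<bullet> (X i - S i j) = (X i \<bullet> X i - X i \<bullet> S i j) + (X j \<bullet> X j - X i \<bullet> S i j)"
      unfolding S_def by (rule orth_mat_diff_scalar_prod[OF signature_orth[OF sg True] X X])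
    then show ?thesis by (simp only: True T_def T'_def if_True distrib_left)
  qed (simp add: T_def T'_def)
  have "(\<Sum>i<n. \<Sum>j<n. T' i j) = (\<Sum>i<n. \<Sum>j<n. T i j)"
    unfolding T'_swap by (rule sum.swap)
  moreover have "x \<bullet> (conn_lap n w d \<sigma> *\<^sub>v x) = (\<Sum>i<n. \<Sum>j<n. T i j)"
    unfolding conn_lap_scalar_prod[OF wg sg x] T_def S_def X_def ..
  ultimately show ?thesis
    unfolding square[unfolded S_def X_def] sum.distrib by simp
qed

lemma parallel_imp_conn_lap_zero:
  assumes wg: "weighted_graph n w" and sg: "signature n w d \<sigma>"
    and x: "x \<in> carrier_vec (n * d)" and par: "parallel n w d \<sigma> x"
  shows "conn_lap n w d \<sigma> *\<^sub>v x = 0\<^sub>v (n * d)"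
proof (rule vec_eq_blocksI)
  show "conn_lap n w d \<sigma> *\<^sub>v x \<in> carrier_vec (n * d)"
    by (rule mult_mat_vec_carrier[OF conn_lap_carrier x])
  fix i assume i: "i < n"
  have "(conn_lap n w d \<sigma> *\<^sub>v x) $ (i * d + a) = 0" if a: "a < d" for a
    unfolding conn_lap_mult_vec_index[OF wg sg i a x]
  proof (intro sum.neutral ballI)
    fix j
    have "adj n w i j \<Longrightarrow> x $ (i * d + a) = (\<sigma> i j *\<^sub>v vec_block d x j) $ a"
      using par a unfolding parallel_def by (metis index_vec_block)
    then show "(if adj n w i j
        then w i j * (x $ (i * d + a) - (\<sigma> i j *\<^sub>v vec_block d x j) $ a) else 0) = 0"
      by simp
  qed
  then show "vec_block d (conn_lap n w d \<sigma> *\<^sub>v x) i = vec_block d (0\<^sub>v (n * d)) i"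
    using i by (intro eq_vecI) auto
qed simp

lemma conn_lap_zero_imp_parallel:
  assumes wg: "weighted_graph n w" and sg: "signature n w d \<sigma>"
    and x: "x \<in> carrier_vec (n * d)" and ker: "conn_lap n w d \<sigma> *\<^sub>v x = 0\<^sub>v (n * d)"
  shows "parallel n w d \<sigma> x"
  unfolding parallel_def
proof (intro allI impI)
  fix i j assume ij: "adj n w i j"
  define E where "E i j = (if adj n w i j then w i j * ((vec_block d x i - \<sigma> i j *\<^sub>v vec_block d x j)
    \<bullet> (vec_block d x i - \<sigma> i j *\<^sub>v vec_block d x j)) else 0)" for i j
  have E_nonneg: "E i j \<ge> 0" for i j
    using scalar_prod_self_nonneg by (simp add: E_def adj_def)
  have "(\<Sum>i<n. \<Sum>j<n. E i j) = 0"
    using conn_lap_quadratic_form[OF wg sg x] ker x by (simp add: E_def)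
  then have "E i j = 0"
    using E_nonneg adj_less[OF ij] by (simp add: sum_nonneg sum_nonneg_eq_0_iff)
  then have "(vec_block d x i - \<sigma> i j *\<^sub>v vec_block d x j)
      \<bullet> (vec_block d x i - \<sigma> i j *\<^sub>v vec_block d x j) = 0"
    using ij by (simp add: E_def adj_def)
  then have "vec_block d x i - \<sigma> i j *\<^sub>v vec_block d x j = 0\<^sub>v d"
    using signature_carrier[OF sg ij]
    by (metis scalar_prod_self_eq_0_iff minus_carrier_vec vec_block_carrier mult_mat_vec_carrier)
  then show "vec_block d x i = \<sigma> i j *\<^sub>v vec_block d x j"
    using signature_carrier[OF sg ij] by (simp add: vec_diff_eq_0_iff)
qed

lemma conn_lap_kernel_iff_parallel:
  assumes "weighted_graph n w" "signature n w d \<sigma>" "x \<in> carrier_vec (n * d)"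
  shows "conn_lap n w d \<sigma> *\<^sub>v x = 0\<^sub>v (n * d) \<longleftrightarrow> parallel n w d \<sigma> x"
  using assms parallel_imp_conn_lap_zero conn_lap_zero_imp_parallel by blast

section \<open>Reflections and orthonormal frames\<close>

(* For y = 0 the division by zero makes this the identity. *)
definition reflection :: "real vec \<Rightarrow> real vec \<Rightarrow> real vec" where
  "reflection y v = v - (2 * (y \<bullet> v) / (y \<bullet> y)) \<cdot>\<^sub>v y"

context
  fixes d :: nat and y :: "real vec"
  assumes y: "y \<in> carrier_vec d"
begin

lemma reflection_carrier [simp]: "v \<in> carrier_vec d \<Longrightarrow> reflection y v \<in> carrier_vec d"
  using y by (simp add: reflection_def)

lemma reflection_add:
  assumes "u \<in> carrier_vec d" "v \<in> carrier_vec d"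
  shows "reflection y (u + v) = reflection y u + reflection y v"
  using assms y
  by (intro eq_vecI)
    (auto simp: reflection_def scalar_prod_add_distrib[of _ d] add_divide_distrib algebra_simps)

lemma reflection_smult:
  assumes "v \<in> carrier_vec d"
  shows "reflection y (c \<cdot>\<^sub>v v) = c \<cdot>\<^sub>v reflection y v"
  using assms y by (intro eq_vecI) (auto simp: reflection_def algebra_simps)

lemma reflection_zero: "reflection y (0\<^sub>v d) = 0\<^sub>v d"
  using y by (intro eq_vecI) (auto simp: reflection_def)

lemma reflection_degenerate: "y \<bullet> y = 0 \<Longrightarrow> v \<in> carrier_vec d \<Longrightarrow> reflection y v = v"
  using y by (intro eq_vecI) (auto simp: reflection_def)

lemma reflection_scalar_prod:
  assumes u: "u \<in> carrier_vec d" and v: "v \<in> carrier_vec d"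
  shows "reflection y u \<bullet> reflection y v = u \<bullet> v"
proof (cases "y \<bullet> y = 0")
  case False
  have "reflection y u \<bullet> reflection y v = u \<bullet> v - 2 * (y \<bullet> v) / (y \<bullet> y) * (y \<bullet> u)
      - 2 * (y \<bullet> u) / (y \<bullet> y) * (y \<bullet> v) + 2 * (y \<bullet> u) / (y \<bullet> y) * (2 * (y \<bullet> v) / (y \<bullet> y)) * (y \<bullet> y)"
    using u v y comm_scalar_prod[OF u y]
    by (simp add: reflection_def minus_scalar_prod_distrib[of _ d]
        scalar_prod_minus_distrib[of _ d])
  then show ?thesis using False by (simp add: field_simps)
qed (use u v in \<open>simp add: reflection_degenerate\<close>)

lemma reflection_reflection:
  assumes v: "v \<in> carrier_vec d"
  shows "reflection y (reflection y v) = v"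
proof (cases "y \<bullet> y = 0")
  case False
  let ?k = "2 * (y \<bullet> v) / (y \<bullet> y)"
  have r: "reflection y v = v - ?k \<cdot>\<^sub>v y" by (rule reflection_def)
  have "y \<bullet> reflection y v = y \<bullet> v - ?k * (y \<bullet> y)"
    unfolding r using v y by (simp add: scalar_prod_minus_distrib[of _ d])
  then have "reflection y (reflection y v) = reflection y v + ?k \<cdot>\<^sub>v y"
    using False v y by (intro eq_vecI) (simp_all add: reflection_def[of y "reflection y v"])
  also have "\<dots> = v" unfolding r using v y by (intro eq_vecI) auto
  finally show ?thesis .
qed (use v in \<open>simp add: reflection_degenerate\<close>)

lemma reflection_self_adjoint:
  assumes "u \<in> carrier_vec d" "v \<in> carrier_vec d"
  shows "reflection y u \<bullet> v = u \<bullet> reflection y v"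
  using reflection_scalar_prod[of u "reflection y v"] assms by (simp add: reflection_reflection)

end

lemma reflection_swap:
  assumes u: "u \<in> carrier_vec d" and e: "e \<in> carrier_vec d" and norm: "u \<bullet> u = e \<bullet> e"
  shows "reflection (u - e) u = e"
proof (cases "(u - e) \<bullet> (u - e) = 0")
  case True
  then have "u = e"
    using u e scalar_prod_self_eq_0_iff[of "u - e" d] vec_diff_eq_0_iff[OF u e] by simp
  moreover have "reflection (u - e) u = u"
    by (rule reflection_degenerate) (use u e True in auto)
  ultimately show ?thesis by simp
next
  case False
  have ue: "e \<bullet> u = u \<bullet> e" using e u by (rule comm_scalar_prod)
  have "(u - e) \<bullet> (u - e) = 2 * ((u - e) \<bullet> u)"
    using u e norm ue
    by (simp add: minus_scalar_prod_distrib[of _ d] scalar_prod_minus_distrib[of _ d])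
  then have "2 * ((u - e) \<bullet> u) / ((u - e) \<bullet> (u - e)) = 1" using False by simp
  then show ?thesis using u e by (intro eq_vecI) (auto simp: reflection_def)
qed

definition vec_subspace :: "nat \<Rightarrow> real vec set \<Rightarrow> bool" where
  "vec_subspace d U \<longleftrightarrow> U \<subseteq> carrier_vec d \<and> 0\<^sub>v d \<in> U
     \<and> (\<forall>u\<in>U. \<forall>v\<in>U. u + v \<in> U) \<and> (\<forall>c. \<forall>u\<in>U. c \<cdot>\<^sub>v u \<in> U)"

lemma vec_subspace_add_cancel:
  assumes U: "vec_subspace d U" and x: "x \<in> U" and y: "y \<in> carrier_vec d"
  shows "x + y \<in> U \<longleftrightarrow> y \<in> U"
proof
  assume "x + y \<in> U"
  moreover have "(x + y) + (-1) \<cdot>\<^sub>v x = y"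
    using U x y by (intro eq_vecI) (auto simp: vec_subspace_def)
  ultimately show "y \<in> U" using U x unfolding vec_subspace_def by metis
qed (use U x in \<open>simp add: vec_subspace_def\<close>)

definition orthonormal_frame :: "nat \<Rightarrow> (nat \<Rightarrow> real vec) \<Rightarrow> bool" where
  "orthonormal_frame d q \<longleftrightarrow> (\<forall>k<d. q k \<in> carrier_vec d)
     \<and> (\<forall>k<d. \<forall>l<d. q k \<bullet> q l = (if k = l then 1 else 0))"

lemma orthonormal_frame_unit_vec: "orthonormal_frame d (unit_vec d)"
  by (simp add: orthonormal_frame_def)

lemma reflection_swap_unit_vec:
  assumes u: "u \<in> carrier_vec (Suc d)" and uu: "u \<bullet> u = 1"
  shows "reflection (u - unit_vec (Suc d) 0) u = unit_vec (Suc d) 0"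
    and "reflection (u - unit_vec (Suc d) 0) (unit_vec (Suc d) 0) = u"
proof -
  have e: "unit_vec (Suc d) 0 \<in> carrier_vec (Suc d)"
    "unit_vec (Suc d) 0 \<bullet> unit_vec (Suc d) 0 = (1 :: real)"
    by auto
  show H: "reflection (u - unit_vec (Suc d) 0) u = unit_vec (Suc d) 0"
    using reflection_swap[OF u e(1)] uu e(2) by simp
  show "reflection (u - unit_vec (Suc d) 0) (unit_vec (Suc d) 0) = u"
    using reflection_reflection[of "u - unit_vec (Suc d) 0" "Suc d" u] u H by simp
qed

lemma reflection_vCons_0_scalar_prod:
  assumes y: "y \<in> carrier_vec (Suc d)" and x: "x \<in> carrier_vec d" and v: "v \<in> carrier_vec (Suc d)"
  shows "reflection y (vCons 0 x) \<bullet> v = x \<bullet> vec d (\<lambda>b. reflection y v $ Suc b)"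
proof -
  have "reflection y (vCons 0 x) \<bullet> v = vCons 0 x \<bullet> reflection y v"
    using x v by (simp add: reflection_self_adjoint[OF y])
  also have "\<dots> = vCons 0 x \<bullet> vCons (reflection y v $ 0) (vec d (\<lambda>b. reflection y v $ Suc b))"
    using y v by (simp add: vCons_hd_tl_vec)
  finally show ?thesis by simp
qed

lemma vec_subspace_reflected_slice:
  assumes U: "vec_subspace (Suc d) U" and y: "y \<in> carrier_vec (Suc d)"
  shows "vec_subspace d {t \<in> carrier_vec d. reflection y (vCons 0 t) \<in> U}"
  using U reflection_zero[OF y] reflection_add[OF y] reflection_smult[OF y]
  by (auto simp: vec_subspace_def zero_vec_Suc vCons_0_add vCons_0_smult)

lemma reflected_slice_iff:
  assumes U: "vec_subspace (Suc d) U" and uU: "u \<in> U" and u: "u \<in> carrier_vec (Suc d)"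
    and uu: "u \<bullet> u = 1" and v: "v \<in> carrier_vec (Suc d)"
  defines "H \<equiv> reflection (u - unit_vec (Suc d) 0)"
  shows "v \<in> U \<longleftrightarrow> H (vCons 0 (vec d (\<lambda>b. H v $ Suc b))) \<in> U"
proof -
  have y: "u - unit_vec (Suc d) 0 \<in> carrier_vec (Suc d)" using u by simp
  let ?t = "vec d (\<lambda>b. H v $ Suc b)"
  have t: "?t \<in> carrier_vec d" by simp
  have split: "H v = (H v $ 0) \<cdot>\<^sub>v unit_vec (Suc d) 0 + vCons 0 ?t"
    using vCons_hd_tl_vec[of "H v" d] vCons_eq_unit_vec_plus[OF t, of "H v $ 0"] y v
    by (simp add: H_def)
  have "v = H (H v)" using reflection_reflection[OF y v] by (simp add: H_def)
  also have "\<dots> = H ((H v $ 0) \<cdot>\<^sub>v unit_vec (Suc d) 0 + vCons 0 ?t)"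
    by (rule arg_cong[where f = H]) (rule split)
  also have "\<dots> = (H v $ 0) \<cdot>\<^sub>v u + H (vCons 0 ?t)"
    using y t reflection_swap_unit_vec(2)[OF u uu]
    by (simp add: H_def reflection_add reflection_smult)
  finally have "v \<in> U \<longleftrightarrow> (H v $ 0) \<cdot>\<^sub>v u + H (vCons 0 ?t) \<in> U"
    by (rule arg_cong[where f = "\<lambda>z. z \<in> U"])
  moreover have "(H v $ 0) \<cdot>\<^sub>v u \<in> U" using U uU by (simp add: vec_subspace_def)
  moreover have "H (vCons 0 ?t) \<in> carrier_vec (Suc d)" using y by (simp add: H_def)
  ultimately show ?thesis using vec_subspace_add_cancel[OF U] by blast
qed

lemma orthonormal_frame_reflected_cons:
  assumes q': "orthonormal_frame d q'" and u: "u \<in> carrier_vec (Suc d)" and uu: "u \<bullet> u = 1"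
  shows "orthonormal_frame (Suc d)
    (\<lambda>k. case k of 0 \<Rightarrow> u | Suc l \<Rightarrow> reflection (u - unit_vec (Suc d) 0) (vCons 0 (q' l)))"
    (is "orthonormal_frame _ ?q")
proof -
  let ?H = "reflection (u - unit_vec (Suc d) 0)"
  have y: "u - unit_vec (Suc d) 0 \<in> carrier_vec (Suc d)" using u by simp
  have q'C: "q' l \<in> carrier_vec d" if "l < d" for l
    using q' that by (simp add: orthonormal_frame_def)
  have u_orth: "u \<bullet> ?H (vCons 0 (q' l)) = 0" if "l < d" for l
  proof -
    have "u \<bullet> ?H (vCons 0 (q' l)) = ?H u \<bullet> vCons 0 (q' l)"
      using reflection_self_adjoint[OF y u, of "vCons 0 (q' l)"] q'C[OF that] by simp
    also have "\<dots> = unit_vec (Suc d) 0 \<bullet> vCons 0 (q' l)"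
      by (simp only: reflection_swap_unit_vec(1)[OF u uu])
    also have "\<dots> = 0" using q'C[OF that] by (simp add: unit_vec_Suc_0)
    finally show ?thesis .
  qed
  show ?thesis
    unfolding orthonormal_frame_def
  proof (intro conjI allI impI)
    fix k l assume k: "k < Suc d" and l: "l < Suc d"
    show "?q k \<in> carrier_vec (Suc d)"
      using k u q'C y by (cases k) auto
    show "?q k \<bullet> ?q l = (if k = l then 1 else 0)"
    proof (cases k; cases l)
      fix k' l' assume "k = Suc k'" "l = Suc l'"
      then show ?thesis using k l q' q'C
        by (simp add: reflection_scalar_prod[OF y] orthonormal_frame_def)
    next
      fix l' assume "k = 0" "l = Suc l'"
      then show ?thesis using l u_orth by simp
    next
      fix k' assume "k = Suc k'" "l = 0"
      then show ?thesis using k u_orth comm_scalar_prod[OF u] y q'C by simp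
    qed (simp add: uu)
  qed
qed

lemma vec_subspace_unit_vec:
  assumes U: "vec_subspace d U" and "U \<noteq> {0\<^sub>v d}"
  obtains u where "u \<in> U" "u \<in> carrier_vec d" "u \<bullet> u = 1"
proof -
  obtain u0 where u0U: "u0 \<in> U" and "u0 \<noteq> 0\<^sub>v d" using assms by (auto simp: vec_subspace_def)
  moreover have u0: "u0 \<in> carrier_vec d" using u0U U by (auto simp: vec_subspace_def)
  ultimately have pos: "u0 \<bullet> u0 > 0"
    using scalar_prod_self_eq_0_iff[OF u0] scalar_prod_self_nonneg[of u0] by linarith
  define u where "u = (1 / sqrt (u0 \<bullet> u0)) \<cdot>\<^sub>v u0"
  show ?thesis
  proof
    show "u \<in> U" using U u0U by (simp add: u_def vec_subspace_def)
    show "u \<in> carrier_vec d" using u0 by (simp add: u_def)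
    show "u \<bullet> u = 1" using u0 pos by (simp add: u_def)
  qed
qed

lemma zero_subspace_unit_vec_frame:
  "(v :: real vec) \<in> carrier_vec d \<Longrightarrow> v \<in> {0\<^sub>v d} \<longleftrightarrow> (\<forall>k. 0 \<le> k \<longrightarrow> k < d \<longrightarrow> unit_vec d k \<bullet> v = 0)"
  by (auto simp: vec_eq_iff)

(* Induction on d: the reflection H exchanging a unit vector u \<in> U with e_0 maps U onto
   span {e_0} + {0} \<times> W, where W = {t. H (0, t) \<in> U} lives in one dimension less. *)
lemma vec_subspace_orthonormal_frame:
  assumes "vec_subspace d U"
  shows "\<exists>q r. orthonormal_frame d q \<and> r \<le> d \<and>
    (\<forall>v\<in>carrier_vec d. v \<in> U \<longleftrightarrow> (\<forall>k. r \<le> k \<longrightarrow> k < d \<longrightarrow> q k \<bullet> v = 0))"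
  using assms
proof (induction d arbitrary: U)
  case 0
  have "v = 0\<^sub>v 0" if "v \<in> carrier_vec 0" for v :: "real vec"
    using that by (intro eq_vecI) auto
  then have "U = {0\<^sub>v 0}" using "0.prems" by (auto simp: vec_subspace_def)
  then show ?case
    using zero_subspace_unit_vec_frame orthonormal_frame_unit_vec
    by (intro exI[of _ "unit_vec 0"] exI[of _ 0]) auto
next
  case (Suc d U)
  show ?case
  proof (cases "U = {0\<^sub>v (Suc d)}")
    case True
    then show ?thesis
      using zero_subspace_unit_vec_frame orthonormal_frame_unit_vec
      by (intro exI[of _ "unit_vec (Suc d)"] exI[of _ 0]) auto
  next
    case False
    then obtain u where uU: "u \<in> U" and u: "u \<in> carrier_vec (Suc d)" and uu: "u \<bullet> u = 1"
      using vec_subspace_unit_vec[OF Suc.prems] by blast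
    define H where "H = reflection (u - unit_vec (Suc d) 0)"
    have y: "u - unit_vec (Suc d) 0 \<in> carrier_vec (Suc d)" using u by simp
    obtain q' r' where q': "orthonormal_frame d q'" and "r' \<le> d"
      and W: "\<forall>t\<in>carrier_vec d. H (vCons 0 t) \<in> U \<longleftrightarrow> (\<forall>k. r' \<le> k \<longrightarrow> k < d \<longrightarrow> q' k \<bullet> t = 0)"
      using Suc.IH[OF vec_subspace_reflected_slice[OF Suc.prems y]] by (auto simp: H_def)
    define q where "q = (\<lambda>k. case k of 0 \<Rightarrow> u | Suc l \<Rightarrow> H (vCons 0 (q' l)))"
    have "v \<in> U \<longleftrightarrow> (\<forall>k. Suc r' \<le> k \<longrightarrow> k < Suc d \<longrightarrow> q k \<bullet> v = 0)"
      if v: "v \<in> carrier_vec (Suc d)" for v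
    proof -
      have "q (Suc k) \<bullet> v = q' k \<bullet> vec d (\<lambda>b. H v $ Suc b)" if "k < d" for k
        using reflection_vCons_0_scalar_prod[OF y _ v] q' that
        by (simp add: q_def H_def orthonormal_frame_def)
      then have "(\<forall>k. Suc r' \<le> k \<longrightarrow> k < Suc d \<longrightarrow> q k \<bullet> v = 0)
          \<longleftrightarrow> (\<forall>k. r' \<le> k \<longrightarrow> k < d \<longrightarrow> q' k \<bullet> vec d (\<lambda>b. H v $ Suc b) = 0)"
        by (metis Suc_le_D Suc_le_mono Suc_less_eq)
      then show ?thesis
        using reflected_slice_iff[OF Suc.prems uU u uu v] W by (simp add: H_def)
    qed
    moreover have "orthonormal_frame (Suc d) q"
      unfolding q_def H_def by (rule orthonormal_frame_reflected_cons[OF q' u uu])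
    ultimately show ?thesis using \<open>r' \<le> d\<close> by (intro exI[of _ q] exI[of _ "Suc r'"]) auto
  qed
qed

definition frame_mat :: "nat \<Rightarrow> (nat \<Rightarrow> real vec) \<Rightarrow> real mat" where
  "frame_mat d q = mat d d (\<lambda>(k, b). q k $ b)"

lemma frame_mat_carrier: "frame_mat d q \<in> carrier_mat d d"
  by (simp add: frame_mat_def)

lemma row_frame_mat: "orthonormal_frame d q \<Longrightarrow> k < d \<Longrightarrow> row (frame_mat d q) k = q k"
  by (intro eq_vecI) (auto simp: frame_mat_def orthonormal_frame_def)

lemma frame_mat_mult_vec_index:
  assumes "orthonormal_frame d q" "k < d"
  shows "(frame_mat d q *\<^sub>v v) $ k = q k \<bullet> v"
proof -
  have "(frame_mat d q *\<^sub>v v) $ k = row (frame_mat d q) k \<bullet> v"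
    by (rule index_mult_mat_vec) (use assms(2) in \<open>simp add: frame_mat_def\<close>)
  then show ?thesis using assms by (simp only: row_frame_mat)
qed

lemma transpose_frame_mat_mult_unit_vec:
  assumes q: "orthonormal_frame d q" and l: "l < d"
  shows "transpose_mat (frame_mat d q) *\<^sub>v unit_vec d l = q l"
proof (rule eq_vecI)
  fix i assume "i < dim_vec (q l)"
  moreover have "q l \<in> carrier_vec d" using q l by (simp add: orthonormal_frame_def)
  ultimately have i: "i < d" by simp
  have "(transpose_mat (frame_mat d q) *\<^sub>v unit_vec d l) $ i = col (frame_mat d q) i \<bullet> unit_vec d l"
    using i by (simp add: frame_mat_def)
  also have "\<dots> = q l $ i" using i l by (simp add: frame_mat_def)
  finally show "(transpose_mat (frame_mat d q) *\<^sub>v unit_vec d l) $ i = q l $ i" .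
qed (use q l in \<open>auto simp: frame_mat_def orthonormal_frame_def\<close>)

lemma orth_mat_frame_mat:
  assumes q: "orthonormal_frame d q"
  shows "orth_mat d (frame_mat d q)"
proof -
  let ?Q = "frame_mat d q"
  have "?Q * transpose_mat ?Q = 1\<^sub>m d"
  proof (rule eq_matI)
    fix k l assume "k < dim_row (1\<^sub>m d)" "l < dim_col (1\<^sub>m d)"
    then have k: "k < d" and l: "l < d" by auto
    then have "(?Q * transpose_mat ?Q) $$ (k, l) = row ?Q k \<bullet> row ?Q l"
      by (simp add: frame_mat_def)
    also have "\<dots> = 1\<^sub>m d $$ (k, l)"
      using q k l by (simp add: row_frame_mat orthonormal_frame_def)
    finally show "(?Q * transpose_mat ?Q) $$ (k, l) = 1\<^sub>m d $$ (k, l)" .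
  qed (simp_all add: frame_mat_def)
  then show ?thesis
    using mat_mult_left_right_inverse[of ?Q d "transpose_mat ?Q"]
    by (simp add: orth_mat_def frame_mat_carrier)
qed

lemma orthonormal_frame_expansion:
  assumes q: "orthonormal_frame d q" and v: "v \<in> carrier_vec d" and b: "b < d"
  shows "v $ b = (\<Sum>k<d. (q k \<bullet> v) * q k $ b)"
proof -
  let ?Q = "frame_mat d q"
  have "v $ b = (transpose_mat ?Q *\<^sub>v (?Q *\<^sub>v v)) $ b"
    using orth_mat_transpose_mult_vec[OF orth_mat_frame_mat[OF q] v] by simp
  also have "\<dots> = (\<Sum>k<d. q k $ b * (?Q *\<^sub>v v) $ k)"
    using b v by (simp add: frame_mat_def scalar_prod_def atLeast0LessThan)
  finally show ?thesis using q by (simp add: frame_mat_mult_vec_index mult.commute)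
qed

section \<open>Orthogonal matrices fixing the first unit vectors\<close>

definition corner_block :: "nat \<Rightarrow> nat \<Rightarrow> 'a mat \<Rightarrow> 'a mat" where
  "corner_block r d M = mat (d - r) (d - r) (\<lambda>(a, b). M $$ (r + a, r + b))"

lemma corner_block_carrier: "corner_block r d M \<in> carrier_mat (d - r) (d - r)"
  by (simp add: corner_block_def)

lemma mat_index_eq_mult_unit_vec:
  "(M :: 'a :: semiring_1 mat) \<in> carrier_mat d d \<Longrightarrow> k < d \<Longrightarrow> l < d \<Longrightarrow>
    M $$ (k, l) = (M *\<^sub>v unit_vec d l) $ k"
  by simp

lemma orth_mat_fixing_unit_vecs_index:
  assumes M: "orth_mat d M" and units: "\<And>l. l < r \<Longrightarrow> M *\<^sub>v unit_vec d l = unit_vec d l"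
    and kl: "k < d" "l < d" "k < r \<or> l < r"
  shows "M $$ (k, l) = (if k = l then 1 else 0)"
proof -
  have MC: "M \<in> carrier_mat d d" using M by (rule orth_mat_carrier)
  have fixT: "transpose_mat M *\<^sub>v unit_vec d k = unit_vec d k" if "k < r" "k < d" for k
    using orth_mat_transpose_mult_vec[OF M, of "unit_vec d k"] units[OF that(1)] by simp
  show ?thesis
  proof (cases "l < r")
    case True
    have "M $$ (k, l) = (M *\<^sub>v unit_vec d l) $ k"
      by (rule mat_index_eq_mult_unit_vec[OF MC kl(1,2)])
    then show ?thesis using units[OF True] kl by simp
  next
    case False
    have "M $$ (k, l) = transpose_mat M $$ (l, k)" using MC kl by simp
    also have "\<dots> = (transpose_mat M *\<^sub>v unit_vec d k) $ l"
      by (rule mat_index_eq_mult_unit_vec) (use MC kl in auto)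
    also have "\<dots> = unit_vec d k $ l" using fixT[of k] False kl by simp
    finally show ?thesis using kl by auto
  qed
qed

lemma orth_mat_fixing_unit_vecs_block:
  assumes M: "orth_mat d M" and r: "r \<le> d" and units: "\<And>l. l < r \<Longrightarrow> M *\<^sub>v unit_vec d l = unit_vec d l"
  shows "M = four_block_mat (1\<^sub>m r) (0\<^sub>m r (d - r)) (0\<^sub>m (d - r) r) (corner_block r d M)"
  using orth_mat_carrier[OF M] r orth_mat_fixing_unit_vecs_index[OF M units]
  by (intro eq_matI) (auto simp: corner_block_def)

lemma orth_mat_corner_block:
  assumes M: "orth_mat d M" and r: "r \<le> d" and units: "\<And>l. l < r \<Longrightarrow> M *\<^sub>v unit_vec d l = unit_vec d l"
  shows "orth_mat (d - r) (corner_block r d M)"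
proof -
  let ?T = "corner_block r d M"
  have MC: "M \<in> carrier_mat d d" using M by (rule orth_mat_carrier)
  have "transpose_mat ?T * ?T = 1\<^sub>m (d - r)"
  proof (rule eq_matI)
    fix a b assume "a < dim_row (1\<^sub>m (d - r))" "b < dim_col (1\<^sub>m (d - r))"
    then have a: "a < d - r" and b: "b < d - r" by auto
    have "(transpose_mat ?T * ?T) $$ (a, b) = (\<Sum>c<d - r. M $$ (r + c, r + a) * M $$ (r + c, r + b))"
      using a b by (simp add: corner_block_def scalar_prod_def atLeast0LessThan)
    also have "\<dots> = (\<Sum>c<d. M $$ (c, r + a) * M $$ (c, r + b))"
    proof -
      have "(\<Sum>c<d. M $$ (c, r + a) * M $$ (c, r + b))
          = (\<Sum>c\<in>{r..<d}. M $$ (c, r + a) * M $$ (c, r + b))"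
        using a r orth_mat_fixing_unit_vecs_index[OF M units] by (intro sum.mono_neutral_right) auto
      also have "\<dots> = (\<Sum>c<d - r. M $$ (r + c, r + a) * M $$ (r + c, r + b))"
        using sum.shift_bounds_nat_ivl[of "\<lambda>c. M $$ (c, r + a) * M $$ (c, r + b)" 0 r "d - r"] r
        by (simp add: atLeast0LessThan add.commute)
      finally show ?thesis ..
    qed
    also have "\<dots> = (transpose_mat M * M) $$ (r + a, r + b)"
      using MC a b by (simp add: scalar_prod_def atLeast0LessThan)
    also have "\<dots> = 1\<^sub>m (d - r) $$ (a, b)"
      using orth_mat_transpose_mult[OF M] a b by simp
    finally show "(transpose_mat ?T * ?T) $$ (a, b) = 1\<^sub>m (d - r) $$ (a, b)" .
  qed (simp_all add: corner_block_def)
  then show ?thesis by (simp add: orth_mat_def corner_block_carrier)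
qed

lemma iota_sum_eq_one_mat: "iota_sum k i j = 1\<^sub>m k"
proof (induction k)
  case (Suc k)
  then show ?case
    using four_block_one_mat[of k 1] by (simp add: sig_dsum_def iota1_def)
qed simp

section \<open>Transport on a connected graph\<close>

locale connected_signature =
  fixes n :: nat and w :: "nat \<Rightarrow> nat \<Rightarrow> real" and d :: nat and \<sigma> :: "nat \<Rightarrow> nat \<Rightarrow> real mat"
  assumes weighted: "weighted_graph n w"
    and connected: "connected_graph n w"
    and sig: "signature n w d \<sigma>"
begin

lemma n_pos: "0 < n"
  using connected by (simp add: connected_graph_def)

lemma kernel_iff_parallel:
  "x \<in> carrier_vec (n * d) \<Longrightarrow> conn_lap n w d \<sigma> *\<^sub>v x = 0\<^sub>v (n * d) \<longleftrightarrow> parallel n w d \<sigma> x"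
  by (rule conn_lap_kernel_iff_parallel[OF weighted sig])

lemma parallel_add:
  assumes x: "x \<in> carrier_vec (n * d)" and y: "y \<in> carrier_vec (n * d)"
    and "parallel n w d \<sigma> x" "parallel n w d \<sigma> y"
  shows "parallel n w d \<sigma> (x + y)"
proof -
  have "conn_lap n w d \<sigma> *\<^sub>v (x + y) = conn_lap n w d \<sigma> *\<^sub>v x + conn_lap n w d \<sigma> *\<^sub>v y"
    by (rule mult_add_distrib_mat_vec[OF conn_lap_carrier x y])
  also have "\<dots> = 0\<^sub>v (n * d)"
    using assms kernel_iff_parallel[OF x] kernel_iff_parallel[OF y] by simp
  finally show ?thesis using kernel_iff_parallel[of "x + y"] x y by simp
qed

lemma parallel_smult:
  assumes x: "x \<in> carrier_vec (n * d)" and "parallel n w d \<sigma> x"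
  shows "parallel n w d \<sigma> (c \<cdot>\<^sub>v x)"
proof -
  have "conn_lap n w d \<sigma> *\<^sub>v (c \<cdot>\<^sub>v x) = c \<cdot>\<^sub>v (conn_lap n w d \<sigma> *\<^sub>v x)"
    by (rule mult_mat_vec[OF conn_lap_carrier x])
  also have "\<dots> = 0\<^sub>v (n * d)" using assms kernel_iff_parallel[OF x] by simp
  finally show ?thesis using kernel_iff_parallel[of "c \<cdot>\<^sub>v x"] x by simp
qed

lemma transport_along_path:
  assumes "(adj n w)\<^sup>*\<^sup>* 0 i"
  shows "\<exists>g. orth_mat d g \<and> (\<forall>x. parallel n w d \<sigma> x \<longrightarrow> vec_block d x 0 = g *\<^sub>v vec_block d x i)"
  using assms
proof (induction rule: rtranclp_induct)
  case base
  show ?case by (intro exI[of _ "1\<^sub>m d"]) (simp add: orth_mat_one)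
next
  case (step j k)
  from step.IH obtain g where g: "orth_mat d g"
    and g0: "\<And>x. parallel n w d \<sigma> x \<Longrightarrow> vec_block d x 0 = g *\<^sub>v vec_block d x j"
    by blast
  have "vec_block d x 0 = (g * \<sigma> j k) *\<^sub>v vec_block d x k" if "parallel n w d \<sigma> x" for x
  proof -
    have "vec_block d x 0 = g *\<^sub>v (\<sigma> j k *\<^sub>v vec_block d x k)"
      using g0[OF that] that step.hyps(2) by (simp add: parallel_def)
    also have "\<dots> = (g * \<sigma> j k) *\<^sub>v vec_block d x k"
      using orth_mat_carrier[OF g] signature_carrier[OF sig step.hyps(2)]
      by (simp add: assoc_mult_mat_vec[of _ d d _ d])
    finally show ?thesis .
  qed
  then show ?case using orth_mat_mult[OF g signature_orth[OF sig step.hyps(2)]] by blast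
qed

lemma transport_exists:
  "\<exists>G. G 0 = 1\<^sub>m d \<and> (\<forall>i<n. orth_mat d (G i) \<and>
     (\<forall>x. parallel n w d \<sigma> x \<longrightarrow> vec_block d x 0 = G i *\<^sub>v vec_block d x i))"
proof -
  let ?P = "\<lambda>i g. orth_mat d g \<and> (\<forall>x. parallel n w d \<sigma> x \<longrightarrow> vec_block d x 0 = g *\<^sub>v vec_block d x i)"
  have "\<exists>g. i < n \<longrightarrow> ?P i g" for i
    using transport_along_path[of i] n_pos connected by (simp add: connected_graph_def)
  then obtain G where G: "\<And>i. i < n \<Longrightarrow> ?P i (G i)"
    using choice[of "\<lambda>i g. i < n \<longrightarrow> ?P i g"] by blast
  have "?P i ((G(0 := 1\<^sub>m d)) i)" if "i < n" for i
    using G[OF that] orth_mat_one by (cases "i = 0") simp_all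
  then show ?thesis by (intro exI[of _ "G(0 := 1\<^sub>m d)"]) simp
qed

definition root_space :: "real vec set" where
  "root_space = {vec_block d x 0 | x. x \<in> carrier_vec (n * d) \<and> parallel n w d \<sigma> x}"

lemma root_spaceI: "x \<in> carrier_vec (n * d) \<Longrightarrow> parallel n w d \<sigma> x \<Longrightarrow> vec_block d x 0 \<in> root_space"
  by (auto simp: root_space_def)

lemma root_spaceE:
  assumes "v \<in> root_space"
  obtains x where "x \<in> carrier_vec (n * d)" "parallel n w d \<sigma> x" "v = vec_block d x 0"
  using assms by (auto simp: root_space_def)

lemma vec_subspace_root_space: "vec_subspace d root_space"
  unfolding vec_subspace_def
proof (intro conjI ballI allI)
  show "0\<^sub>v d \<in> root_space"
    using root_spaceI[of "0\<^sub>v (n * d)"] kernel_iff_parallel[of "0\<^sub>v (n * d)"]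
      conn_lap_carrier[of n w d \<sigma>] n_pos
    by simp
  fix c u v assume "u \<in> root_space" "v \<in> root_space"
  then obtain x y where x: "x \<in> carrier_vec (n * d)" "parallel n w d \<sigma> x" "u = vec_block d x 0"
    and y: "y \<in> carrier_vec (n * d)" "parallel n w d \<sigma> y" "v = vec_block d y 0"
    by (metis root_spaceE)
  have "u + v = vec_block d (x + y) 0" using x y n_pos by (simp add: vec_block_add)
  then show "u + v \<in> root_space"
    using root_spaceI[of "x + y"] parallel_add[OF x(1) y(1) x(2) y(2)] x(1) y(1) by simp
  have "c \<cdot>\<^sub>v u = vec_block d (c \<cdot>\<^sub>v x) 0" using x n_pos by (simp add: vec_block_smult)
  then show "c \<cdot>\<^sub>v u \<in> root_space"
    using root_spaceI[of "c \<cdot>\<^sub>v x"] parallel_smult[OF x(1) x(2)] x(1) by simp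
qed (auto simp: root_space_def)

end

section \<open>Splitting off the parallel sections\<close>

locale connected_signature_frame = connected_signature +
  fixes G :: "nat \<Rightarrow> real mat" and q :: "nat \<Rightarrow> real vec" and r :: nat
  assumes transport_0: "G 0 = 1\<^sub>m d"
    and transport_orth: "i < n \<Longrightarrow> orth_mat d (G i)"
    and transport_parallel: "i < n \<Longrightarrow> parallel n w d \<sigma> x \<Longrightarrow> vec_block d x 0 = G i *\<^sub>v vec_block d x i"
    and frame: "orthonormal_frame d q"
    and rank_le: "r \<le> d"
    and root_space_iff: "v \<in> carrier_vec d \<Longrightarrow> v \<in> root_space \<longleftrightarrow> (\<forall>k. r \<le> k \<longrightarrow> k < d \<longrightarrow> q k \<bullet> v = 0)"
begin

lemma frame_carrier: "k < d \<Longrightarrow> q k \<in> carrier_vec d"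
  and frame_scalar_prod: "k < d \<Longrightarrow> l < d \<Longrightarrow> q k \<bullet> q l = (if k = l then 1 else 0)"
  using frame by (auto simp: orthonormal_frame_def)

lemma transport_carrier: "i < n \<Longrightarrow> G i \<in> carrier_mat d d"
  using transport_orth orth_mat_carrier by blast

definition lift :: "real vec \<Rightarrow> real vec" where
  "lift v = vec_of_blocks n d (\<lambda>i. transpose_mat (G i) *\<^sub>v v)"

lemma lift_carrier: "lift v \<in> carrier_vec (n * d)"
  by (simp add: lift_def)

lemma vec_block_lift:
  assumes "i < n" "v \<in> carrier_vec d"
  shows "vec_block d (lift v) i = transpose_mat (G i) *\<^sub>v v"
  using assms transport_carrier[OF assms(1)] by (simp add: lift_def)

lemma vec_block_lift_0: "v \<in> carrier_vec d \<Longrightarrow> vec_block d (lift v) 0 = v"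
  using vec_block_lift[OF n_pos] by (simp add: transport_0)

lemma parallel_eq_lift:
  assumes x: "x \<in> carrier_vec (n * d)" and par: "parallel n w d \<sigma> x"
  shows "x = lift (vec_block d x 0)"
proof (rule vec_eq_blocksI[OF x lift_carrier])
  fix i assume i: "i < n"
  have "vec_block d (lift (vec_block d x 0)) i = transpose_mat (G i) *\<^sub>v vec_block d x 0"
    by (rule vec_block_lift[OF i vec_block_carrier])
  also have "\<dots> = transpose_mat (G i) *\<^sub>v (G i *\<^sub>v vec_block d x i)"
    by (simp only: transport_parallel[OF i par])
  also have "\<dots> = vec_block d x i"
    by (rule orth_mat_transpose_mult_vec[OF transport_orth[OF i] vec_block_carrier])
  finally show "vec_block d x i = vec_block d (lift (vec_block d x 0)) i" ..
qed

lemma lift_parallel: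
  assumes "v \<in> root_space"
  shows "parallel n w d \<sigma> (lift v)"
proof -
  obtain x where x: "x \<in> carrier_vec (n * d)" "parallel n w d \<sigma> x" and v: "v = vec_block d x 0"
    using assms by (rule root_spaceE)
  then show ?thesis using parallel_eq_lift[OF x] by simp
qed

lemma frame_in_root_space: "k < r \<Longrightarrow> q k \<in> root_space"
  using root_space_iff[OF frame_carrier] frame_scalar_prod rank_le by auto

lemma root_space_expansion:
  assumes v: "v \<in> root_space" and b: "b < d"
  shows "v $ b = (\<Sum>k<r. (q k \<bullet> v) * q k $ b)"
proof -
  have vC: "v \<in> carrier_vec d" using v by (auto simp: root_space_def)
  have "v $ b = (\<Sum>k<d. (q k \<bullet> v) * q k $ b)"
    by (rule orthonormal_frame_expansion[OF frame vC b])
  also have "\<dots> = (\<Sum>k<r. (q k \<bullet> v) * q k $ b)"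
    using root_space_iff[OF vC] v rank_le by (intro sum.mono_neutral_right) auto
  finally show ?thesis .
qed

interpretation K: kernel "n * d" "n * d" "conn_lap n w d \<sigma>"
  by unfold_locales (rule conn_lap_carrier)

definition frame_sections :: "real vec set" where
  "frame_sections = (\<lambda>k. lift (q k)) ` {..<r}"

lemma vec_block_lift_frame: "k < r \<Longrightarrow> vec_block d (lift (q k)) 0 = q k"
  using rank_le by (simp add: vec_block_lift_0 frame_carrier)

lemma frame_sections_kernel: "frame_sections \<subseteq> mat_kernel (conn_lap n w d \<sigma>)"
  using kernel_iff_parallel lift_parallel frame_in_root_space lift_carrier
  by (auto simp: frame_sections_def intro!: mat_kernelI[OF conn_lap_carrier])

lemma inj_on_lift_frame: "inj_on (\<lambda>k. lift (q k)) {..<r}"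
proof (rule inj_onI)
  fix k l assume k: "k \<in> {..<r}" and l: "l \<in> {..<r}" and eq: "lift (q k) = lift (q l)"
  then have "q k \<bullet> q k = q k \<bullet> q l" using vec_block_lift_frame by (metis lessThan_iff)
  then show "k = l" using k l rank_le frame_scalar_prod by (auto split: if_splits)
qed

lemma vec_block_lincomb_frame_sections:
  assumes b: "b < d"
  shows "vec_block d (K.lincomb a frame_sections) 0 $ b = (\<Sum>k<r. a (lift (q k)) * q k $ b)"
proof -
  have "b < n * d" using block_index_less[OF n_pos b] by simp
  then have "vec_block d (K.lincomb a frame_sections) 0 $ b = (\<Sum>y\<in>frame_sections. a y * y $ b)"
    using b by (simp add: K.lincomb_index[OF _ frame_sections_kernel])
  also have "\<dots> = (\<Sum>k<r. a (lift (q k)) * vec_block d (lift (q k)) 0 $ b)"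
    using b by (simp add: frame_sections_def sum.reindex[OF inj_on_lift_frame])
  finally show ?thesis by (simp add: vec_block_lift_frame)
qed

lemma lin_indpt_frame_sections: "K.lin_indpt frame_sections"
proof (rule K.Ker.finite_lin_indpt2[OF _ frame_sections_kernel])
  fix a assume zero: "K.lincomb a frame_sections = 0\<^sub>v (n * d)"
  have "a (lift (q l)) = 0" if l: "l < r" for l
  proof -
    have dim: "dim_vec (q k) = d" if "k < d" for k using frame_carrier[OF that] by simp
    have "0 = q l \<bullet> vec_block d (K.lincomb a frame_sections) 0"
      using zero n_pos frame_carrier l rank_le by simp
    also have "\<dots> = (\<Sum>b<d. q l $ b * (\<Sum>k<r. a (lift (q k)) * q k $ b))"
      unfolding scalar_prod_def
      by (auto simp: atLeast0LessThan vec_block_lincomb_frame_sections simp del: index_vec_block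
          intro!: sum.cong)
    also have "\<dots> = (\<Sum>k<r. a (lift (q k)) * (q l \<bullet> q k))"
      using l rank_le dim
      by (simp add: scalar_prod_def atLeast0LessThan sum_distrib_left sum.swap[of _ "{..<d}"]
          mult.left_commute)
    also have "\<dots> = (\<Sum>k<r. if k = l then a (lift (q l)) else 0)"
      using l rank_le by (intro sum.cong) (auto simp: frame_scalar_prod)
    finally show ?thesis using l by simp
  qed
  then show "\<forall>v\<in>frame_sections. a v = 0" by (auto simp: frame_sections_def)
qed (simp add: frame_sections_def)

lemma span_frame_sections: "K.span frame_sections = mat_kernel (conn_lap n w d \<sigma>)"
proof
  show "K.span frame_sections \<subseteq> mat_kernel (conn_lap n w d \<sigma>)"
    by (rule K.Ker.span_is_subset2[OF frame_sections_kernel])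
  have fin: "finite frame_sections" by (simp add: frame_sections_def)
  show "mat_kernel (conn_lap n w d \<sigma>) \<subseteq> K.span frame_sections"
  proof
    fix x assume "x \<in> mat_kernel (conn_lap n w d \<sigma>)"
    then have x: "x \<in> carrier_vec (n * d)" "parallel n w d \<sigma> x"
      using mat_kernelD[OF conn_lap_carrier] kernel_iff_parallel by blast+
    define x0 where "x0 = vec_block d x 0"
    have x0: "x0 \<in> root_space" unfolding x0_def by (rule root_spaceI[OF x])
    define y where "y = K.lincomb (\<lambda>v. vec_block d v 0 \<bullet> x0) frame_sections"
    have "y \<in> K.span frame_sections"
      unfolding K.Ker.finite_span[OF fin frame_sections_kernel] y_def by blast
    then have y: "y \<in> carrier_vec (n * d)" "parallel n w d \<sigma> y"
      using K.Ker.span_is_subset2[OF frame_sections_kernel] mat_kernelD[OF conn_lap_carrier]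
        kernel_iff_parallel by blast+
    have "vec_block d y 0 = x0"
    proof (rule eq_vecI)
      fix b assume "b < dim_vec x0"
      then have b: "b < d" by (simp add: x0_def)
      then show "vec_block d y 0 $ b = x0 $ b"
        unfolding y_def vec_block_lincomb_frame_sections[OF b] root_space_expansion[OF x0 b]
        by (intro sum.cong) (simp_all add: vec_block_lift_frame)
    qed (simp add: x0_def)
    then have "x = y" using parallel_eq_lift x y by (metis x0_def)
    with \<open>y \<in> K.span frame_sections\<close> show "x \<in> K.span frame_sections" by simp
  qed
qed

lemma kernel_dim_eq_rank: "kernel_dim (conn_lap n w d \<sigma>) = r"
proof -
  have "K.basis frame_sections"
    using lin_indpt_frame_sections span_frame_sections frame_sections_kernel
    by (simp add: K.Ker.basis_def)
  then have "K.dim = card frame_sections"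
    by (rule K.Ker.dim_basis[rotated]) (simp add: frame_sections_def)
  then show ?thesis using card_image[OF inj_on_lift_frame] by (simp add: frame_sections_def)
qed

definition gauge :: "nat \<Rightarrow> real mat" where
  "gauge i = frame_mat d q * G i"

definition switched :: "nat \<Rightarrow> nat \<Rightarrow> real mat" where
  "switched i j = gauge i * \<sigma> i j * transpose_mat (gauge j)"

definition tau :: "nat \<Rightarrow> nat \<Rightarrow> real mat" where
  "tau i j = corner_block r d (switched i j)"

lemma gauge_orth: "i < n \<Longrightarrow> orth_mat d (gauge i)"
  unfolding gauge_def by (rule orth_mat_mult[OF orth_mat_frame_mat[OF frame] transport_orth])

lemma gauge_carrier: "i < n \<Longrightarrow> gauge i \<in> carrier_mat d d"
  using gauge_orth orth_mat_carrier by blast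

lemma switched_orth: "adj n w i j \<Longrightarrow> orth_mat d (switched i j)"
  unfolding switched_def
  by (meson adj_less gauge_orth orth_mat_mult orth_mat_transpose signature_orth[OF sig])

lemma switched_transpose:
  assumes ij: "adj n w i j"
  shows "switched j i = transpose_mat (switched i j)"
proof -
  have gi: "gauge i \<in> carrier_mat d d" and gj: "gauge j \<in> carrier_mat d d"
    and s: "\<sigma> i j \<in> carrier_mat d d"
    using adj_less[OF ij] gauge_carrier signature_carrier[OF sig ij] by auto
  have "transpose_mat (switched i j)
      = transpose_mat (transpose_mat (gauge j)) * transpose_mat (gauge i * \<sigma> i j)"
    unfolding switched_def by (rule transpose_mult) (use gi gj s in auto)
  also have "\<dots> = gauge j * (transpose_mat (\<sigma> i j) * transpose_mat (gauge i))"
    using gi s by (simp add: transpose_mult)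
  also have "\<dots> = switched j i"
    using gi gj s
    by (simp add: switched_def signature_transpose[OF sig ij] assoc_mult_mat[of _ d d _ d _ d])
  finally show ?thesis ..
qed

lemma gauge_mult_signature:
  assumes ij: "adj n w i j"
  shows "gauge i * \<sigma> i j = switched i j * gauge j"
proof -
  have gi: "gauge i \<in> carrier_mat d d" and gj: "gauge j \<in> carrier_mat d d"
    and s: "\<sigma> i j \<in> carrier_mat d d"
    using adj_less[OF ij] gauge_carrier signature_carrier[OF sig ij] by auto
  have "switched i j * gauge j = (gauge i * \<sigma> i j) * (transpose_mat (gauge j) * gauge j)"
    unfolding switched_def by (rule assoc_mult_mat) (use gi gj s in auto)
  also have "\<dots> = gauge i * \<sigma> i j"
    using gi s orth_mat_transpose_mult[OF gauge_orth] adj_less[OF ij] by simp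
  finally show ?thesis ..
qed

lemma transpose_gauge_unit_vec:
  assumes "i < n" "l < d"
  shows "transpose_mat (gauge i) *\<^sub>v unit_vec d l = vec_block d (lift (q l)) i"
  using assms transport_carrier[OF assms(1)] frame_mat_carrier[of d q]
  by (simp add: gauge_def transpose_mult[of _ d d] assoc_mult_mat_vec[of _ d d _ d]
      transpose_frame_mat_mult_unit_vec[OF frame] vec_block_lift frame_carrier)

lemma gauge_lift_frame:
  assumes "i < n" "l < d"
  shows "gauge i *\<^sub>v vec_block d (lift (q l)) i = unit_vec d l"
  using orth_mat_mult_transpose_vec[OF gauge_orth[OF assms(1)], of "unit_vec d l"] assms
  by (simp add: transpose_gauge_unit_vec)

lemma switched_fixes_unit_vec:
  assumes ij: "adj n w i j" and l: "l < r"
  shows "switched i j *\<^sub>v unit_vec d l = unit_vec d l"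
proof -
  have i: "i < n" and j: "j < n" and ld: "l < d" using adj_less[OF ij] l rank_le by auto
  have par: "parallel n w d \<sigma> (lift (q l))"
    using l by (simp add: lift_parallel frame_in_root_space)
  have "switched i j *\<^sub>v unit_vec d l
      = gauge i *\<^sub>v (\<sigma> i j *\<^sub>v (transpose_mat (gauge j) *\<^sub>v unit_vec d l))"
    using gauge_carrier[OF i] gauge_carrier[OF j] signature_carrier[OF sig ij]
    by (simp add: switched_def assoc_mult_mat_vec[of _ d d _ d])
  also have "\<dots> = gauge i *\<^sub>v vec_block d (lift (q l)) i"
    using par ij by (simp add: transpose_gauge_unit_vec[OF j ld] parallel_def)
  also have "\<dots> = unit_vec d l" by (rule gauge_lift_frame[OF i ld])
  finally show ?thesis .
qed

lemma switched_block_diagonal: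
  "adj n w i j \<Longrightarrow>
    switched i j = four_block_mat (1\<^sub>m r) (0\<^sub>m r (d - r)) (0\<^sub>m (d - r) r) (tau i j)"
  unfolding tau_def
  by (rule orth_mat_fixing_unit_vecs_block[OF switched_orth rank_le switched_fixes_unit_vec])

lemma signature_tau: "signature n w (d - r) tau"
  unfolding signature_def
proof (intro allI impI conjI)
  fix i j assume ij: "adj n w i j"
  show "orth_mat (d - r) (tau i j)"
    unfolding tau_def
    by (rule orth_mat_corner_block[OF switched_orth[OF ij] rank_le switched_fixes_unit_vec[OF ij]])
  show "tau j i = transpose_mat (tau i j)"
    using switched_transpose[OF ij] orth_mat_carrier[OF switched_orth[OF ij]]
    by (intro eq_matI) (auto simp: tau_def corner_block_def)
qed

lemma switch_equiv_tau: "switch_equiv n w d \<sigma> (sig_dsum r (d - r) (iota_sum r) tau)"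
  unfolding switch_equiv_def sig_dsum_def iota_sum_eq_one_mat
  using gauge_orth gauge_mult_signature switched_block_diagonal by auto

definition padded :: "real vec \<Rightarrow> nat \<Rightarrow> real vec" where
  "padded y i = 0\<^sub>v r @\<^sub>v vec_block (d - r) y i"

definition unswitch :: "real vec \<Rightarrow> real vec" where
  "unswitch y = vec_of_blocks n d (\<lambda>i. transpose_mat (gauge i) *\<^sub>v padded y i)"

lemma padded_carrier: "padded y i \<in> carrier_vec d"
proof -
  have "padded y i \<in> carrier_vec (r + (d - r))"
    unfolding padded_def by (rule append_carrier_vec) auto
  then show ?thesis using rank_le by simp
qed

lemma switched_padded:
  assumes par: "parallel n w (d - r) tau y" and ij: "adj n w i j"
  shows "switched i j *\<^sub>v padded y j = padded y i"
proof -
  let ?yj = "vec_block (d - r) y j"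
  have "switched i j *\<^sub>v padded y j
      = (1\<^sub>m r *\<^sub>v 0\<^sub>v r + 0\<^sub>m r (d - r) *\<^sub>v ?yj) @\<^sub>v (0\<^sub>m (d - r) r *\<^sub>v 0\<^sub>v r + tau i j *\<^sub>v ?yj)"
    unfolding switched_block_diagonal[OF ij] padded_def
    by (rule four_block_mat_mult_vec) (auto simp: tau_def corner_block_carrier)
  also have "\<dots> = 0\<^sub>v r @\<^sub>v (tau i j *\<^sub>v ?yj)"
    using corner_block_carrier[of r d "switched i j"] by (auto simp: tau_def)
  also have "tau i j *\<^sub>v ?yj = vec_block (d - r) y i"
    using par ij by (simp add: parallel_def)
  finally show ?thesis by (simp add: padded_def)
qed

lemma vec_block_unswitch:
  assumes "i < n"
  shows "vec_block d (unswitch y) i = transpose_mat (gauge i) *\<^sub>v padded y i"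
proof -
  have "transpose_mat (gauge i) *\<^sub>v padded y i \<in> carrier_vec d"
    using gauge_carrier[OF assms] padded_carrier by simp
  then show ?thesis using assms by (simp add: unswitch_def)
qed

lemma parallel_unswitch:
  assumes par: "parallel n w (d - r) tau y"
  shows "parallel n w d \<sigma> (unswitch y)"
  unfolding parallel_def
proof (intro allI impI)
  fix i j assume ij: "adj n w i j"
  have i: "i < n" and j: "j < n" using adj_less[OF ij] by auto
  have "padded y i = gauge i *\<^sub>v (\<sigma> i j *\<^sub>v (transpose_mat (gauge j) *\<^sub>v padded y j))"
    using switched_padded[OF par ij] gauge_carrier[OF i] gauge_carrier[OF j]
      signature_carrier[OF sig ij] padded_carrier
    by (simp add: switched_def assoc_mult_mat_vec[of _ d d _ d])
  moreover have "\<sigma> i j *\<^sub>v (transpose_mat (gauge j) *\<^sub>v padded y j) \<in> carrier_vec d"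
    using gauge_carrier[OF j] signature_carrier[OF sig ij] padded_carrier by simp
  ultimately show "vec_block d (unswitch y) i = \<sigma> i j *\<^sub>v vec_block d (unswitch y) j"
    using orth_mat_transpose_mult_vec[OF gauge_orth[OF i]] by (simp add: vec_block_unswitch i j)
qed

lemma padded_root_eq_0:
  assumes par: "parallel n w (d - r) tau y"
  shows "padded y 0 = 0\<^sub>v d"
proof (rule eq_vecI)
  fix k assume "k < dim_vec (0\<^sub>v d)"
  then have k: "k < d" by simp
  have root: "vec_block d (unswitch y) 0 = transpose_mat (frame_mat d q) *\<^sub>v padded y 0"
    using vec_block_unswitch[OF n_pos] transport_0 frame_mat_carrier[of d q]
    by (simp add: gauge_def)
  have "vec_block d (unswitch y) 0 \<in> root_space"
    by (rule root_spaceI[OF _ parallel_unswitch[OF par]]) (simp add: unswitch_def)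
  then have "r \<le> k \<Longrightarrow> q k \<bullet> vec_block d (unswitch y) 0 = 0" using root_space_iff k by auto
  moreover have "q k \<bullet> vec_block d (unswitch y) 0
      = (frame_mat d q *\<^sub>v (transpose_mat (frame_mat d q) *\<^sub>v padded y 0)) $ k"
    by (simp add: root frame_mat_mult_vec_index[OF frame k])
  moreover have "\<dots> = padded y 0 $ k"
    using orth_mat_mult_transpose_vec[OF orth_mat_frame_mat[OF frame] padded_carrier] by simp
  ultimately show "padded y 0 $ k = 0\<^sub>v d $ k" using k by (cases "k < r") (auto simp: padded_def)
qed (simp add: padded_carrier)

lemma parallel_tau_eq_0:
  assumes y: "y \<in> carrier_vec (n * (d - r))" and par: "parallel n w (d - r) tau y"
  shows "y = 0\<^sub>v (n * (d - r))"
proof (rule vec_eq_blocksI[OF y zero_carrier_vec])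
  fix i assume i: "i < n"
  have "vec_block d (unswitch y) 0 = 0\<^sub>v d"
    using vec_block_unswitch[OF n_pos] padded_root_eq_0[OF par] gauge_carrier[OF n_pos] by simp
  with parallel_eq_lift[OF _ parallel_unswitch[OF par]] have "unswitch y = lift (0\<^sub>v d)"
    by (simp add: unswitch_def)
  then have "transpose_mat (gauge i) *\<^sub>v padded y i = vec_block d (lift (0\<^sub>v d)) i"
    by (simp add: vec_block_unswitch[OF i, symmetric])
  also have "\<dots> = 0\<^sub>v d" using transport_carrier[OF i] by (simp add: vec_block_lift[OF i])
  finally have "transpose_mat (gauge i) *\<^sub>v padded y i = 0\<^sub>v d" .
  then have zero: "padded y i = 0\<^sub>v d"
    using orth_mat_mult_transpose_vec[OF gauge_orth[OF i] padded_carrier, of y i]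
      gauge_carrier[OF i]
    by simp
  show "vec_block (d - r) y i = vec_block (d - r) (0\<^sub>v (n * (d - r))) i"
  proof (rule eq_vecI)
    fix a assume a: "a < dim_vec (vec_block (d - r) (0\<^sub>v (n * (d - r))) i)"
    then have "vec_block (d - r) y i $ a = padded y i $ (r + a)" by (simp add: padded_def)
    then show "vec_block (d - r) y i $ a = vec_block (d - r) (0\<^sub>v (n * (d - r))) i $ a"
      using zero a i by simp
  qed simp
qed

lemma invertible_conn_lap_tau: "invertible_mat (conn_lap n w (d - r) tau)"
proof -
  let ?A = "conn_lap n w (d - r) tau"
  have A: "?A \<in> carrier_mat (n * (d - r)) (n * (d - r))" by (rule conn_lap_carrier)
  have "det ?A \<noteq> 0"
    unfolding det_0_iff_vec_prod_zero_field[OF A]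
    using parallel_tau_eq_0 conn_lap_zero_imp_parallel[OF weighted signature_tau] by blast
  then obtain B where "B \<in> carrier_mat (n * (d - r)) (n * (d - r))" "B * ?A = 1\<^sub>m (n * (d - r))"
    "?A * B = 1\<^sub>m (n * (d - r))"
    using det_non_zero_imp_unit[OF A, of "()"] by (auto simp: Units_def ring_mat_def)
  then show ?thesis using A by (auto simp: invertible_mat_def inverts_mat_def)
qed

end

theorem theorem2p9:
  fixes n d :: nat and w :: "nat \<Rightarrow> nat \<Rightarrow> real" and \<sigma> :: "nat \<Rightarrow> nat \<Rightarrow> real mat"
  assumes "weighted_graph n w"
    and "connected_graph n w"
    and "signature n w d \<sigma>"
    and "\<not> consistent n w d \<sigma>"
  shows "let \<rho> = kernel_dim (conn_lap n w d \<sigma>) in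
    \<exists>\<tau>. signature n w (d - \<rho>) \<tau> \<and>
        invertible_mat (conn_lap n w (d - \<rho>) \<tau>) \<and>
        switch_equiv n w d \<sigma> (sig_dsum \<rho> (d - \<rho>) (iota_sum \<rho>) \<tau>)"
proof -
  interpret connected_signature n w d \<sigma>
    using assms(1-3) by unfold_locales
  obtain G where "G 0 = 1\<^sub>m d" and "\<And>i. i < n \<Longrightarrow> orth_mat d (G i) \<and>
      (\<forall>x. parallel n w d \<sigma> x \<longrightarrow> vec_block d x 0 = G i *\<^sub>v vec_block d x i)"
    using transport_exists by blast
  moreover obtain q r where "orthonormal_frame d q" "r \<le> d"
    and "\<forall>v\<in>carrier_vec d. v \<in> root_space \<longleftrightarrow> (\<forall>k. r \<le> k \<longrightarrow> k < d \<longrightarrow> q k \<bullet> v = 0)"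
    using vec_subspace_orthonormal_frame[OF vec_subspace_root_space] by blast
  ultimately interpret connected_signature_frame n w d \<sigma> G q r
    by unfold_locales auto
  show ?thesis
    unfolding Let_def kernel_dim_eq_rank
    using signature_tau invertible_conn_lap_tau switch_equiv_tau by blast
qed

end
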